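(* Let $\ell\ge1$ and let $C=(w_1,\dots,w_{2\ell+1})$ be a semi-valid tuple in $\Omega_n$. Then the edge set of $H_n^{(2)}(C)$ consists exactly of the pairs $\{w_i,w_{i+1}\}$ for $1\le i\le 2\ell+1$ together with all pairs $\{v,w_i\}$ with $v\in(w_{i-1},w_{i+1})$, $1\le i\le 2\ell+1$ (indices of the $w$'s mod $2\ell+1$). In particular $|H_n^{(2)}(C)|=n$.
   Context: $\Omega_n=\{v_0,\dots,v_{n-1}\}$ with cyclic order $v_0<v_1<\dots<v_{n-1}<v_0$ (indices mod $n$). For distinct vertices $u,w$, $(u,w)$ is the set of vertices strictly between $u$ and $w$ when moving clockwise (increasing index mod $n$) from $u$ to $w$, and $[u,w]=(u,w)\cup\{u,w\}$. A tuple $C=(w_1,\dots,w_{2\ell+1})$ of distinct vertices is semi-valid if $w_1<w_3<w_5<\dots<w_{2\ell+1}<w_2<w_4<\dots<w_{2\ell}<w_1$, meaning these vertices appear in this clockwise cyclic order. For such $C$ and $r\ge2$, $H_n^{(r)}(C)=\{e\in\binom{\Omega_n}{r}: e\cap[w_i,w_{i-1}]\neq\emptyset\ \text{for all } i\in\{1,\dots,2\ell+1\}\}$, with indices of the $w$'s taken mod $2\ell+1$ (so $[w_1,w_0]=[w_1,w_{2\ell+1}]$). *)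

theory Defs
  imports Main
begin

text \<open>Vertices of Omega_n are the naturals 0,...,n-1 (v_i is i), cyclically ordered.\<close>

text \<open>(u,w): vertices strictly between u and w moving clockwise from u to w.\<close>
definition cyc_open :: "nat \<Rightarrow> nat \<Rightarrow> nat \<Rightarrow> nat set" where
  "cyc_open n u w = {v. v < n \<and> 0 < (v + n - u) mod n \<and> (v + n - u) mod n < (w + n - u) mod n}"

definition cyc_closed :: "nat \<Rightarrow> nat \<Rightarrow> nat \<Rightarrow> nat set" where
  "cyc_closed n u w = cyc_open n u w \<union> {u, w}"

definition cyc_ordered :: "nat \<Rightarrow> nat list \<Rightarrow> bool" where
  "cyc_ordered n xs \<longleftrightarrow> distinct xs \<and> set xs \<subseteq> {..<n} \<and>
     sorted_wrt (<) (map (\<lambda>x. (x + n - hd xs) mod n) xs)"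

text \<open>The tuple C = (w_1,...,w_m) is the list ws (w_i = ws ! (i-1));
  wi ws i is w_i with the index i (an integer) taken mod m = length ws.\<close>
definition wi :: "nat list \<Rightarrow> int \<Rightarrow> nat" where
  "wi ws i = ws ! nat ((i - 1) mod int (length ws))"

text \<open>Semi-valid: w_1 < w_3 < ... < w_{2l+1} < w_2 < w_4 < ... < w_{2l} < w_1 cyclically.\<close>
definition semi_valid :: "nat \<Rightarrow> nat \<Rightarrow> nat list \<Rightarrow> bool" where
  "semi_valid n l ws \<longleftrightarrow> length ws = 2 * l + 1 \<and>
     cyc_ordered n (map (\<lambda>j. ws ! (2 * j)) [0..<l + 1] @ map (\<lambda>j. ws ! (2 * j + 1)) [0..<l])"

definition H :: "nat \<Rightarrow> nat \<Rightarrow> nat list \<Rightarrow> nat set set" where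
  "H n r ws = {e. e \<subseteq> {..<n} \<and> card e = r \<and>
     (\<forall>i\<in>{1..int (length ws)}. e \<inter> cyc_closed n (wi ws i) (wi ws (i - 1)) \<noteq> {})}"

end

theory Submission
  imports Defs
begin

text \<open>List the vertices of C clockwise as \<open>q_0, ..., q_2l\<close>; then \<open>q_c = w_(2c+1)\<close> (indices of
  the w's mod 2l+1), so if \<open>w_i = q_c\<close> then \<open>w_(i-1) = q_(c+l)\<close> and \<open>w_(i+1) = q_(c+l+1)\<close>.
  Give each vertex a slot in \<open>{0..4l+1}\<close>: \<open>2k\<close> for \<open>q_k\<close>, \<open>2k+1\<close> for the vertices strictly
  between \<open>q_k\<close> and \<open>q_(k+1)\<close>. The arc \<open>[w_i, w_(i-1)]\<close> then consists of the slots from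
  \<open>2c\<close> to \<open>2c+2l\<close>, cyclically, and a pair of slots meets all these arcs exactly when the two
  slots are opposite on the cycle of length 4l+2, or are both vertex slots 2l or 2l+2 apart.
  So the edges of \<open>H_n^(2)(C)\<close> are exactly the pairs \<open>{v, partner v}\<close>, where the partner of a
  vertex of slot \<open>2k\<close> or \<open>2k+1\<close> is \<open>q_(k+l+1)\<close>; distinct vertices give distinct pairs, and
  sorting the pairs by the parity of the slot of v gives the two families of the statement.\<close>

definition cyc_dist :: "nat \<Rightarrow> nat \<Rightarrow> nat \<Rightarrow> nat" where
  "cyc_dist n u v = (v + n - u) mod n"

lemma cyc_dist_eq:
  assumes "u < n" "v < n"
  shows "cyc_dist n u v = (if u \<le> v then v - u else v + n - u)"
proof (cases "u \<le> v")
  case True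
  then have "v + n - u = (v - u) + n" using assms by simp
  moreover have "v - u < n" using assms by simp
  ultimately show ?thesis using True unfolding cyc_dist_def by (metis mod_add_self2 mod_less)
qed (use assms in \<open>simp add: cyc_dist_def\<close>)

lemma cyc_dist_less: "0 < n \<Longrightarrow> cyc_dist n u v < n"
  by (simp add: cyc_dist_def)

lemma cyc_dist_eq_0_iff: "u < n \<Longrightarrow> v < n \<Longrightarrow> cyc_dist n u v = 0 \<longleftrightarrow> v = u"
  by (simp add: cyc_dist_eq)

lemma cyc_dist_inj:
  "u < n \<Longrightarrow> v < n \<Longrightarrow> w < n \<Longrightarrow> cyc_dist n u v = cyc_dist n u w \<Longrightarrow> v = w"
  by (simp add: cyc_dist_eq split: if_splits)

lemma cyc_dist_rebase:
  assumes "b < n" "u < n" "v < n"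
  shows "cyc_dist n u v = cyc_dist n (cyc_dist n b u) (cyc_dist n b v)"
proof -
  have int_cyc_dist: "int (cyc_dist n x y) = (int y - int x) mod int n" if "x < n" for x y
  proof -
    have "int (y + n - x) = (int y - int x) + int n" using that by simp
    then show ?thesis by (simp add: cyc_dist_def of_nat_mod)
  qed
  have "int (cyc_dist n u v) = ((int v - int b) - (int u - int b)) mod int n"
    using int_cyc_dist assms by simp
  also have "\<dots> = ((int v - int b) mod int n - (int u - int b) mod int n) mod int n"
    by (simp add: mod_diff_eq)
  also have "\<dots> = int (cyc_dist n (cyc_dist n b u) (cyc_dist n b v))"
    using int_cyc_dist[of "cyc_dist n b u"] int_cyc_dist[of b] assms cyc_dist_less[of n] by simp
  finally show ?thesis by simp
qed

lemma cyc_dist_le_cyc_dist_iff: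
  "a < n \<Longrightarrow> b < n \<Longrightarrow> c < n \<Longrightarrow> cyc_dist n a c \<le> cyc_dist n a b \<longleftrightarrow>
    (if a \<le> b then a \<le> c \<and> c \<le> b else a \<le> c \<or> c \<le> b)"
  by (simp add: cyc_dist_eq) linarith

lemma cyc_dist_between_iff:
  "a < n \<Longrightarrow> b < n \<Longrightarrow> c < n \<Longrightarrow> 0 < cyc_dist n a c \<and> cyc_dist n a c < cyc_dist n a b \<longleftrightarrow>
    (if a \<le> b then a < c \<and> c < b else a < c \<or> c < b)"
  by (simp add: cyc_dist_eq) linarith

lemma mem_cyc_open_iff:
  "v \<in> cyc_open n u w \<longleftrightarrow> v < n \<and> 0 < cyc_dist n u v \<and> cyc_dist n u v < cyc_dist n u w"
  by (simp add: cyc_open_def cyc_dist_def)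

lemma mem_cyc_closed_iff:
  assumes "u < n" "w < n"
  shows "v \<in> cyc_closed n u w \<longleftrightarrow> v < n \<and> cyc_dist n u v \<le> cyc_dist n u w"
proof (cases "v = u \<or> v = w")
  case True
  then show ?thesis using assms by (auto simp: cyc_closed_def cyc_dist_eq)
next
  case False
  then have "v < n \<Longrightarrow> 0 < cyc_dist n u v \<and> cyc_dist n u v \<noteq> cyc_dist n u w"
    using cyc_dist_eq_0_iff[OF assms(1)] cyc_dist_inj[OF assms(1) _ assms(2)] by blast
  then show ?thesis using False by (auto simp: cyc_closed_def mem_cyc_open_iff)
qed

lemma mem_cyc_closed_rebase:
  assumes "b < n" "u < n" "w < n"
  defines "d \<equiv> cyc_dist n b"
  shows "v \<in> cyc_closed n u w \<longleftrightarrow> v < n \<and>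
    (if d u \<le> d w then d u \<le> d v \<and> d v \<le> d w else d u \<le> d v \<or> d v \<le> d w)"
proof -
  have d_less: "d x < n" for x using assms cyc_dist_less[of n] by simp
  have "v \<in> cyc_closed n u w \<longleftrightarrow> v < n \<and> cyc_dist n (d u) (d v) \<le> cyc_dist n (d u) (d w)"
    using mem_cyc_closed_iff[OF assms(2,3)] cyc_dist_rebase[OF assms(1,2)] unfolding d_def
    by (metis assms(3))
  then show ?thesis using cyc_dist_le_cyc_dist_iff[OF d_less d_less d_less] by simp
qed

lemma mem_cyc_open_rebase:
  assumes "b < n" "u < n" "w < n"
  defines "d \<equiv> cyc_dist n b"
  shows "v \<in> cyc_open n u w \<longleftrightarrow> v < n \<and>
    (if d u \<le> d w then d u < d v \<and> d v < d w else d u < d v \<or> d v < d w)"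
proof -
  have d_less: "d x < n" for x using assms cyc_dist_less[of n] by simp
  have "v \<in> cyc_open n u w \<longleftrightarrow>
      v < n \<and> 0 < cyc_dist n (d u) (d v) \<and> cyc_dist n (d u) (d v) < cyc_dist n (d u) (d w)"
    using mem_cyc_open_iff cyc_dist_rebase[OF assms(1,2)] assms(3) unfolding d_def by metis
  then show ?thesis using cyc_dist_between_iff[OF d_less d_less d_less] by simp
qed

lemma wi_cong:
  "i mod int (length ws) = j mod int (length ws) \<Longrightarrow> wi ws i = wi ws j"
  unfolding wi_def by (metis mod_diff_cong)

text \<open>The arc \<open>[w_i, w_(i-1)]\<close> in slot coordinates, where \<open>w_i\<close> is the \<open>c\<close>-th vertex of the tuple
  in clockwise order: slot \<open>2k\<close> is the \<open>k\<close>-th vertex, slot \<open>2k+1\<close> the gap after it.\<close>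
definition slot_arc :: "nat \<Rightarrow> nat \<Rightarrow> nat \<Rightarrow> bool" where
  "slot_arc l c a \<longleftrightarrow>
     (if c \<le> l then 2 * c \<le> a \<and> a \<le> 2 * (c + l) else 2 * c \<le> a \<or> a \<le> 2 * (c - l - 1))"

definition covers :: "nat \<Rightarrow> nat \<Rightarrow> nat \<Rightarrow> bool" where
  "covers l a b \<longleftrightarrow> (\<forall>c < 2 * l + 1. slot_arc l c a \<or> slot_arc l c b)"

lemma covers_sym: "covers l a b \<longleftrightarrow> covers l b a"
  unfolding covers_def by blast

lemma covers_iff:
  assumes "1 \<le> l" "a \<le> b" "b \<le> 4 * l + 1"
  shows "covers l a b \<longleftrightarrow> b = a + 2 * l + 1 \<or> even a \<and> (b = a + 2 * l \<or> b = a + 2 * l + 2)"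
proof
  assume cov: "covers l a b"
  have low: "(2 * j \<le> a \<and> a \<le> 2 * l + 2 * j) \<or> (2 * j \<le> b \<and> b \<le> 2 * l + 2 * j)"
    if "j \<le> l" for j
    using cov[unfolded covers_def, rule_format, of j] that unfolding slot_arc_def by auto
  have high: "a + 2 \<le> 2 * j \<or> 2 * l + 2 * j \<le> a \<or> b + 2 \<le> 2 * j \<or> 2 * l + 2 * j \<le> b"
    if "1 \<le> j" "j \<le> l" for j
    using cov[unfolded covers_def, rule_format, of "l + j"] that unfolding slot_arc_def by auto
  have a_le: "a \<le> 2 * l" using low[of 0] assms by auto
  obtain k where "a = 2 * k \<or> a = 2 * k + 1" by (metis oddE evenE)
  then consider (odd) "a = 2 * k + 1" | (even) "a = 2 * k" by blast
  then show "b = a + 2 * l + 1 \<or> even a \<and> (b = a + 2 * l \<or> b = a + 2 * l + 2)"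
  proof cases
    case odd
    then have "k + 1 \<le> l" using a_le by auto
    then show ?thesis using low[of "k + 1"] high[of "k + 1"] odd assms by auto
  next
    case even
    have "a + 2 * l \<le> b"
    proof (cases "k = 0")
      case True
      then show ?thesis using low[of l] even assms by auto
    next
      case False
      then show ?thesis using high[of k] even a_le assms by auto
    qed
    moreover have "b \<le> a + 2 * l + 2"
      using low[of "k + 1"] even a_le assms by (cases "k < l") auto
    ultimately show ?thesis using even by auto
  qed
next
  assume ab: "b = a + 2 * l + 1 \<or> even a \<and> (b = a + 2 * l \<or> b = a + 2 * l + 2)"
  then have "a \<le> 2 * l" using assms(3) by auto
  show "covers l a b"
    unfolding covers_def
  proof (intro allI impI)
    fix c assume "c < 2 * l + 1"
    then show "slot_arc l c a \<or> slot_arc l c b"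
      using ab assms(3) \<open>a \<le> 2 * l\<close> unfolding slot_arc_def by (cases "c \<le> l") (auto elim!: evenE)
  qed
qed

lemma covers_opposite_vertex_slot:
  assumes "1 \<le> l" "a \<le> 4 * l + 1"
  shows "covers l a (2 * ((a div 2 + l + 1) mod (2 * l + 1)))"
proof -
  define k where "k = a div 2"
  have a: "a = 2 * k \<or> a = 2 * k + 1" unfolding k_def by auto
  show ?thesis
  proof (cases "k < l")
    case True
    then have "2 * ((a div 2 + l + 1) mod (2 * l + 1)) = 2 * k + 2 * l + 2"
      unfolding k_def by simp
    moreover have "covers l a (2 * k + 2 * l + 2)"
      by (rule covers_iff[OF assms(1), THEN iffD2]) (use a True in auto)
    ultimately show ?thesis by simp
  next
    case False
    have "a div 2 + l + 1 = (k - l) + (2 * l + 1)" "k - l < 2 * l + 1"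
      using False assms a unfolding k_def by auto
    then have "(a div 2 + l + 1) mod (2 * l + 1) = k - l" by (metis mod_add_self2 mod_less)
    moreover have "covers l (2 * (k - l)) a"
      by (rule covers_iff[OF assms(1), THEN iffD2]) (use a False assms in auto)
    ultimately show ?thesis using covers_sym by metis
  qed
qed

lemma add_mod_neq_self:
  fixes k d m :: nat
  assumes "k < m" "0 < d" "d < m"
  shows "(k + d) mod m \<noteq> k"
proof
  assume "(k + d) mod m = k"
  then have "(k + d) mod m = k mod m" using assms(1) by simp
  then have "m dvd d" by (simp add: mod_eq_dvd_iff_nat)
  then show False using assms(2,3) by (simp add: nat_dvd_not_less)
qed

locale semi_valid_tuple =
  fixes n l :: nat and ws :: "nat list"
  assumes l_pos: "1 \<le> l" and semi_valid: "semi_valid n l ws"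
begin

definition m :: nat where "m = 2 * l + 1"

text \<open>The tuple in clockwise order: \<open>qs ! c = w_(2c+1)\<close>, indices of the w's mod \<open>m\<close>.\<close>
definition qs :: "nat list" where
  "qs = map (\<lambda>j. ws ! (2 * j)) [0..<l + 1] @ map (\<lambda>j. ws ! (2 * j + 1)) [0..<l]"

lemma length_ws: "length ws = m"
  using semi_valid unfolding semi_valid_def m_def by simp

lemma length_qs: "length qs = m"
  unfolding qs_def m_def by simp

lemma m_ge_3: "3 \<le> m"
  using l_pos unfolding m_def by simp

lemma cyc_ordered_qs: "cyc_ordered n qs"
  using semi_valid unfolding semi_valid_def qs_def by simp

lemma qs_nth_less: "c < m \<Longrightarrow> qs ! c < n"
  using cyc_ordered_qs length_qs unfolding cyc_ordered_def by (auto simp: subset_eq)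

lemma qs_nth:
  assumes "c < m"
  shows "qs ! c = ws ! (2 * c mod m)"
proof (cases "c \<le> l")
  case True
  then show ?thesis unfolding qs_def m_def by (simp add: nth_append)
next
  case False
  define d where "d = c - l - 1"
  have d: "c = (l + 1) + d" "d < l" using False assms unfolding d_def m_def by auto
  have "qs ! c = ws ! (2 * d + 1)" unfolding qs_def using d by (simp add: nth_append)
  moreover have "2 * c = (2 * d + 1) + m" "2 * d + 1 < m" using d unfolding m_def by auto
  ultimately show ?thesis by (metis mod_add_self2 mod_less)
qed

text \<open>If \<open>qs ! c = w_i\<close> then \<open>qs ! tuple_pred c = w_(i-1)\<close> and
  \<open>qs ! tuple_succ c = w_(i+1)\<close>.\<close>
definition tuple_pred :: "nat \<Rightarrow> nat" where
  "tuple_pred c = (c + l) mod m"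

definition tuple_succ :: "nat \<Rightarrow> nat" where
  "tuple_succ c = (c + l + 1) mod m"

lemma tuple_pred_less: "tuple_pred c < m"
  unfolding tuple_pred_def using m_ge_3 by simp

lemma tuple_succ_less: "tuple_succ c < m"
  unfolding tuple_succ_def using m_ge_3 by simp

lemma tuple_succ_pred: "c < m \<Longrightarrow> tuple_succ (tuple_pred c) = c"
proof -
  assume "c < m"
  have "tuple_succ (tuple_pred c) = (c + l + (l + 1)) mod m"
    unfolding tuple_succ_def tuple_pred_def by (metis add.assoc mod_add_left_eq)
  also have "c + l + (l + 1) = c + m" unfolding m_def by simp
  finally show ?thesis using \<open>c < m\<close> by simp
qed

lemma tuple_pred_succ: "c < m \<Longrightarrow> tuple_pred (tuple_succ c) = c"
proof -
  assume "c < m"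
  have "tuple_pred (tuple_succ c) = (c + l + 1 + l) mod m"
    unfolding tuple_succ_def tuple_pred_def by (metis mod_add_left_eq)
  also have "c + l + 1 + l = c + m" unfolding m_def by simp
  finally show ?thesis using \<open>c < m\<close> by simp
qed

lemma tuple_succ_succ: "tuple_succ (tuple_succ c) = (c + 1) mod m"
proof -
  have "tuple_succ (tuple_succ c) = (c + l + 1 + (l + 1)) mod m"
    unfolding tuple_succ_def by (metis add.assoc mod_add_left_eq)
  also have "c + l + 1 + (l + 1) = (c + 1) + m" unfolding m_def by simp
  also have "((c + 1) + m) mod m = (c + 1) mod m" by (rule mod_add_self2)
  finally show ?thesis .
qed

lemma Suc_tuple_pred_mod: "(tuple_pred c + 1) mod m = tuple_succ c"
  unfolding tuple_succ_def tuple_pred_def by (metis mod_add_left_eq)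

lemma wi_odd: "wi ws (2 * int c + 1) = qs ! (c mod m)"
proof -
  have "wi ws (2 * int c + 1) = ws ! (2 * c mod m)"
    unfolding wi_def length_ws by (simp add: nat_mod_distrib nat_mult_distrib)
  also have "\<dots> = qs ! (c mod m)"
    using qs_nth[of "c mod m"] m_ge_3 by (simp add: mod_mult_right_eq)
  finally show ?thesis .
qed

lemma wi_around:
  assumes "i mod int m = (2 * int c + 1) mod int m"
  shows "wi ws (i - 1) = qs ! tuple_pred c" "wi ws i = qs ! (c mod m)"
    "wi ws (i + 1) = qs ! tuple_succ c"
proof -
  have shift: "(i + j) mod int m = (2 * int c + 1 + j) mod int m" for j
    using assms by (metis mod_add_left_eq)
  have "(i - 1) mod int m = (2 * int c + int m) mod int m"
    using shift[of "-1"] by simp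
  also have "2 * int c + int m = 2 * int (c + l) + 1"
    unfolding m_def by simp
  finally show "wi ws (i - 1) = qs ! tuple_pred c"
    unfolding tuple_pred_def by (metis wi_cong wi_odd length_ws)
  show "wi ws i = qs ! (c mod m)"
    using assms by (metis wi_cong wi_odd length_ws)
  have "(i + 1) mod int m = (2 * int c + 2 + int m) mod int m"
    using shift[of 1] by (simp add: algebra_simps)
  also have "2 * int c + 2 + int m = 2 * int (c + l + 1) + 1"
    unfolding m_def by simp
  finally show "wi ws (i + 1) = qs ! tuple_succ c"
    unfolding tuple_succ_def by (metis wi_cong wi_odd length_ws)
qed

lemma ex_tuple_index_iff:
  "(\<exists>i\<in>{1..int m}. P (wi ws (i - 1)) (wi ws i) (wi ws (i + 1))) \<longleftrightarrow>
   (\<exists>c<m. P (qs ! tuple_pred c) (qs ! c) (qs ! tuple_succ c))"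
proof
  assume "\<exists>i\<in>{1..int m}. P (wi ws (i - 1)) (wi ws i) (wi ws (i + 1))"
  then obtain i where P: "P (wi ws (i - 1)) (wi ws i) (wi ws (i + 1))" by blast
  define c where "c = nat ((i - 1) * int (l + 1) mod int m)"
  have c_int: "int c = (i - 1) * int (l + 1) mod int m"
    unfolding c_def using m_ge_3 by simp
  then have "int c < int m" using m_ge_3 by simp
  then have "c < m" by simp
  \<comment> \<open>\<open>l + 1\<close> is the inverse of 2 modulo \<open>m\<close>\<close>
  have "(2 * int c + 1) mod int m = (2 * ((i - 1) * int (l + 1)) + 1) mod int m"
    unfolding c_int by (metis mod_add_left_eq mod_mult_right_eq)
  also have "2 * ((i - 1) * int (l + 1)) + 1 = i + (i - 1) * int m"
    unfolding m_def by (simp add: algebra_simps)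
  finally have "i mod int m = (2 * int c + 1) mod int m" by simp
  then show "\<exists>c<m. P (qs ! tuple_pred c) (qs ! c) (qs ! tuple_succ c)"
    using P wi_around[of i c] \<open>c < m\<close> by auto
next
  assume "\<exists>c<m. P (qs ! tuple_pred c) (qs ! c) (qs ! tuple_succ c)"
  then obtain c where c: "c < m" "P (qs ! tuple_pred c) (qs ! c) (qs ! tuple_succ c)"
    by blast
  define i where "i = int (2 * c mod m) + 1"
  have "2 * c mod m < m" using m_ge_3 by simp
  then have "i \<in> {1..int m}" unfolding i_def by simp
  moreover have "i mod int m = (2 * int c + 1) mod int m"
    unfolding i_def by (simp add: zmod_int mod_add_left_eq)
  ultimately show "\<exists>i\<in>{1..int m}. P (wi ws (i - 1)) (wi ws i) (wi ws (i + 1))"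
    using c wi_around[of i c] by (metis mod_less)
qed

definition offset :: "nat \<Rightarrow> nat" where
  "offset v = cyc_dist n (qs ! 0) v"

lemma offset_inj: "x < n \<Longrightarrow> y < n \<Longrightarrow> offset x = offset y \<Longrightarrow> x = y"
  unfolding offset_def using cyc_dist_inj[OF qs_nth_less[of 0]] m_ge_3 by simp

lemma offset_qs_0: "offset (qs ! 0) = 0"
  unfolding offset_def using qs_nth_less m_ge_3 cyc_dist_eq_0_iff by simp

lemma offset_qs_strict_mono: "i < j \<Longrightarrow> j < m \<Longrightarrow> offset (qs ! i) < offset (qs ! j)"
proof -
  have "qs \<noteq> []" using length_qs m_ge_3 by auto
  then have "hd qs = qs ! 0" by (simp add: hd_conv_nth)
  then have "sorted_wrt (<) (map offset qs)"
    using cyc_ordered_qs unfolding cyc_ordered_def offset_def cyc_dist_def by simp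
  then show "i < j \<Longrightarrow> j < m \<Longrightarrow> offset (qs ! i) < offset (qs ! j)"
    using length_qs unfolding sorted_wrt_iff_nth_less by auto
qed

lemma offset_qs_mono: "i \<le> j \<Longrightarrow> j < m \<Longrightarrow> offset (qs ! i) \<le> offset (qs ! j)"
  using offset_qs_strict_mono[of i j] by (cases "i = j") auto

definition last_vertex :: "nat \<Rightarrow> nat" where
  "last_vertex x = Max {k. k < m \<and> offset (qs ! k) \<le> x}"

lemma last_vertex:
  "last_vertex x < m" "offset (qs ! last_vertex x) \<le> x"
  "k < m \<Longrightarrow> offset (qs ! k) \<le> x \<Longrightarrow> k \<le> last_vertex x"
proof -
  let ?S = "{k. k < m \<and> offset (qs ! k) \<le> x}"
  have "0 \<in> ?S" using m_ge_3 offset_qs_0 by simp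
  then have "last_vertex x \<in> ?S" unfolding last_vertex_def by (intro Max_in) auto
  then show "last_vertex x < m" "offset (qs ! last_vertex x) \<le> x" by auto
  show "k < m \<Longrightarrow> offset (qs ! k) \<le> x \<Longrightarrow> k \<le> last_vertex x"
    unfolding last_vertex_def by (intro Max_ge) auto
qed

lemma less_offset_next_vertex:
  "last_vertex x + 1 < m \<Longrightarrow> x < offset (qs ! (last_vertex x + 1))"
  using last_vertex(3)[of "last_vertex x + 1" x] by linarith

text \<open>Slot \<open>2 * k\<close> is the vertex \<open>qs ! k\<close>, slot \<open>2 * k + 1\<close> the gap
  between \<open>qs ! k\<close> and the next vertex of the tuple.\<close>
definition offset_slot :: "nat \<Rightarrow> nat" where
  "offset_slot x = 2 * last_vertex x + (if x = offset (qs ! last_vertex x) then 0 else 1)"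

lemma offset_vertex_le_iff: "a < m \<Longrightarrow> offset (qs ! a) \<le> x \<longleftrightarrow> 2 * a \<le> offset_slot x"
proof
  assume "a < m" "offset (qs ! a) \<le> x"
  then show "2 * a \<le> offset_slot x" using last_vertex(3) unfolding offset_slot_def by fastforce
next
  assume "a < m" "2 * a \<le> offset_slot x"
  then have "a \<le> last_vertex x" unfolding offset_slot_def by (auto split: if_splits)
  then show "offset (qs ! a) \<le> x"
    using offset_qs_mono last_vertex(1,2) order_trans by blast
qed

lemma le_offset_vertex_iff: "b < m \<Longrightarrow> x \<le> offset (qs ! b) \<longleftrightarrow> offset_slot x \<le> 2 * b"
proof -
  assume b: "b < m"
  consider "last_vertex x < b" | "last_vertex x = b" | "b < last_vertex x" by linarith
  then show ?thesis
  proof cases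
    case 1
    then have "x < offset (qs ! (last_vertex x + 1))" using less_offset_next_vertex b by simp
    moreover have "offset (qs ! (last_vertex x + 1)) \<le> offset (qs ! b)"
      using offset_qs_mono 1 b by simp
    ultimately show ?thesis using 1 unfolding offset_slot_def by auto
  next
    case 2
    then show ?thesis using last_vertex(2)[of x] unfolding offset_slot_def by auto
  next
    case 3
    then have "offset (qs ! b) < offset (qs ! last_vertex x)"
      using offset_qs_strict_mono last_vertex(1) by blast
    then show ?thesis using 3 last_vertex(2)[of x] unfolding offset_slot_def by auto
  qed
qed

lemma offset_slot_le: "offset_slot x \<le> 4 * l + 1"
  using last_vertex(1)[of x] unfolding offset_slot_def m_def by auto

lemma offset_slot_vertex: "k < m \<Longrightarrow> offset_slot (offset (qs ! k)) = 2 * k"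
  using offset_vertex_le_iff[of k "offset (qs ! k)"] le_offset_vertex_iff[of k "offset (qs ! k)"]
  by simp

lemma offset_slot_eq_odd_iff:
  assumes "j < m"
  shows "offset_slot x = 2 * j + 1 \<longleftrightarrow>
    offset (qs ! j) < x \<and> (j + 1 < m \<longrightarrow> x < offset (qs ! (j + 1)))"
proof -
  have "offset (qs ! j) < x \<longleftrightarrow> 2 * j < offset_slot x"
    using le_offset_vertex_iff[OF assms, of x] by linarith
  moreover have "x < offset (qs ! (j + 1)) \<longleftrightarrow> offset_slot x < 2 * j + 2" if "j + 1 < m"
    using offset_vertex_le_iff[OF that, of x] by auto
  moreover have "offset_slot x \<le> 2 * j + 1" if "\<not> j + 1 < m"
    using offset_slot_le[of x] assms that unfolding m_def by linarith
  ultimately show ?thesis by linarith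
qed

definition slot :: "nat \<Rightarrow> nat" where
  "slot v = offset_slot (offset v)"

lemma slot_qs: "k < m \<Longrightarrow> slot (qs ! k) = 2 * k"
  unfolding slot_def by (rule offset_slot_vertex)

lemma slot_le: "slot v \<le> 4 * l + 1"
  unfolding slot_def by (rule offset_slot_le)

lemma slot_eq_even:
  assumes "v < n" "slot v = 2 * k"
  shows "k < m" "v = qs ! k"
proof -
  show k: "k < m" using slot_le[of v] assms(2) unfolding m_def by linarith
  have "offset v = offset (qs ! k)"
    using offset_vertex_le_iff[OF k, of "offset v"] le_offset_vertex_iff[OF k, of "offset v"] assms(2)
    unfolding slot_def by simp
  then show "v = qs ! k" using offset_inj[OF assms(1) qs_nth_less[OF k]] by simp
qed

lemma mem_cyc_closed_slot:
  assumes "a < m" "b < m"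
  shows "v \<in> cyc_closed n (qs ! a) (qs ! b) \<longleftrightarrow> v < n \<and>
     (if a \<le> b then 2 * a \<le> slot v \<and> slot v \<le> 2 * b else 2 * a \<le> slot v \<or> slot v \<le> 2 * b)"
proof -
  have "offset (qs ! a) \<le> offset (qs ! b) \<longleftrightarrow> a \<le> b"
    using offset_qs_mono[of a b] offset_qs_strict_mono[of b a] assms by (cases "a \<le> b") auto
  then show ?thesis
    using mem_cyc_closed_rebase[OF qs_nth_less qs_nth_less qs_nth_less, of 0 a b v] m_ge_3 assms
      offset_vertex_le_iff[OF assms(1), of "offset v"] le_offset_vertex_iff[OF assms(2), of "offset v"]
    unfolding slot_def offset_def by auto
qed

lemma mem_cyc_open_slot:
  assumes "k < m"
  shows "v \<in> cyc_open n (qs ! k) (qs ! ((k + 1) mod m)) \<longleftrightarrow> v < n \<and> slot v = 2 * k + 1"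
proof (cases "k + 1 < m")
  case True
  then have "offset (qs ! k) < offset (qs ! (k + 1))" using offset_qs_strict_mono by simp
  then show ?thesis
    using mem_cyc_open_rebase[OF qs_nth_less qs_nth_less qs_nth_less, of 0 k "k + 1" v] m_ge_3 assms True
      offset_slot_eq_odd_iff[OF assms, of "offset v"]
    unfolding slot_def offset_def by auto
next
  case False
  then have "k + 1 = m" using assms by simp
  then have "(k + 1) mod m = 0" by simp
  moreover have "offset (qs ! 0) < offset (qs ! k)"
    using offset_qs_strict_mono[of 0 k] assms \<open>k + 1 = m\<close> m_ge_3 by simp
  ultimately show ?thesis
    using mem_cyc_open_rebase[OF qs_nth_less qs_nth_less qs_nth_less, of 0 k 0 v] m_ge_3 assms False
      offset_slot_eq_odd_iff[OF assms, of "offset v"] offset_qs_0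
    unfolding slot_def offset_def by auto
qed

lemma mem_arc_iff_slot_arc:
  assumes "c < m"
  shows "v \<in> cyc_closed n (qs ! c) (qs ! tuple_pred c) \<longleftrightarrow> v < n \<and> slot_arc l c (slot v)"
proof (cases "c \<le> l")
  case True
  then have "tuple_pred c = c + l" "c + l < m" unfolding tuple_pred_def m_def by simp_all
  then show ?thesis using mem_cyc_closed_slot[OF assms, of "c + l" v] True unfolding slot_arc_def by auto
next
  case False
  then have "c + l = (c - l - 1) + m" "c - l - 1 < m" using assms unfolding m_def by auto
  then have "tuple_pred c = c - l - 1" unfolding tuple_pred_def by simp
  then show ?thesis
    using mem_cyc_closed_slot[OF assms \<open>c - l - 1 < m\<close>, of v] False unfolding slot_arc_def by auto
qed

lemma H_arc_condition_iff:
  "(\<forall>i\<in>{1..int (length ws)}. e \<inter> cyc_closed n (wi ws i) (wi ws (i - 1)) \<noteq> {}) \<longleftrightarrow>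
   (\<forall>c<m. e \<inter> cyc_closed n (qs ! c) (qs ! tuple_pred c) \<noteq> {})"
  using ex_tuple_index_iff[of "\<lambda>u w _. e \<inter> cyc_closed n w u = {}"] length_ws by auto

lemma mem_H2_iff:
  "e \<in> H n 2 ws \<longleftrightarrow>
    (\<exists>x y. e = {x, y} \<and> x < n \<and> y < n \<and> x \<noteq> y \<and> covers l (slot x) (slot y))"
proof -
  have pair: "(\<forall>c<m. {x, y} \<inter> cyc_closed n (qs ! c) (qs ! tuple_pred c) \<noteq> {}) \<longleftrightarrow>
      covers l (slot x) (slot y)" if "x < n" "y < n" for x y
    using mem_arc_iff_slot_arc that unfolding covers_def m_def[symmetric] by auto
  show ?thesis
    unfolding H_def H_arc_condition_iff card_2_iff using pair by fastforce
qed

definition partner :: "nat \<Rightarrow> nat" where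
  "partner v = qs ! tuple_succ (slot v div 2)"

lemma partner_less: "partner v < n"
  unfolding partner_def using qs_nth_less tuple_succ_less by simp

lemma slot_partner: "slot (partner v) = 2 * tuple_succ (slot v div 2)"
  unfolding partner_def using slot_qs tuple_succ_less by simp

lemma partner_neq: "partner v \<noteq> v"
proof
  assume fixed: "partner v = v"
  define k where "k = slot v div 2"
  have "slot v = 2 * tuple_succ k" using slot_partner[of v] fixed unfolding k_def by simp
  then have "k = tuple_succ k" unfolding k_def by simp
  moreover have "k < m" using slot_le[of v] unfolding k_def m_def by simp
  ultimately show False
    using add_mod_neq_self[of k m "l + 1"] l_pos unfolding tuple_succ_def m_def by simp
qed

lemma covers_imp_partner:
  assumes "x < n" "y < n" "slot x \<le> slot y" "covers l (slot x) (slot y)"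
  shows "y = partner x \<or> x = partner y"
proof -
  define k where "k = slot x div 2"
  have "slot y = slot x + 2 * l + 1 \<or> even (slot x) \<and> (slot y = slot x + 2 * l \<or> slot y = slot x + 2 * l + 2)"
    using covers_iff[OF l_pos assms(3) slot_le] assms(4) by blast
  then consider (behind) "slot x = 2 * k" "slot y div 2 = k + l" | (ahead) "slot y = 2 * (k + l + 1)"
    unfolding k_def by (cases "even (slot x)") (auto elim!: evenE oddE)
  then show ?thesis
  proof cases
    case behind
    have "k < m" "x = qs ! k" using slot_eq_even[OF assms(1) behind(1)] by auto
    moreover have "tuple_succ (k + l) = k"
      using tuple_succ_pred[OF \<open>k < m\<close>] \<open>k < m\<close> unfolding tuple_pred_def tuple_succ_def
      by (metis mod_add_left_eq)
    ultimately show ?thesis unfolding partner_def using behind(2) by simp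
  next
    case ahead
    then have "k + l + 1 < m" "y = qs ! (k + l + 1)" using slot_eq_even[OF assms(2)] by auto
    then show ?thesis unfolding partner_def tuple_succ_def k_def by simp
  qed
qed

lemma covers_slot_iff_partner:
  assumes "x < n" "y < n"
  shows "covers l (slot x) (slot y) \<longleftrightarrow> y = partner x \<or> x = partner y"
proof
  assume cov: "covers l (slot x) (slot y)"
  show "y = partner x \<or> x = partner y"
  proof (cases "slot x \<le> slot y")
    case True
    show ?thesis using covers_imp_partner[OF assms True cov] .
  next
    case False
    then have "slot y \<le> slot x" by simp
    then show ?thesis using covers_imp_partner[OF assms(2,1)] cov covers_sym by blast
  qed
next
  have "covers l (slot v) (slot (partner v))" for v
    using covers_opposite_vertex_slot[OF l_pos slot_le] slot_partner
    unfolding tuple_succ_def m_def by simp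
  then show "y = partner x \<or> x = partner y \<Longrightarrow> covers l (slot x) (slot y)"
    using covers_sym by blast
qed

lemma H2_eq_partner_pairs: "H n 2 ws = (\<lambda>v. {v, partner v}) ` {..<n}"
proof (intro equalityI subsetI)
  fix e assume "e \<in> H n 2 ws"
  then obtain x y where xy: "e = {x, y}" "x < n" "y < n" "covers l (slot x) (slot y)"
    unfolding mem_H2_iff by blast
  then have "e = {x, partner x} \<or> e = {y, partner y}"
    using covers_slot_iff_partner[OF xy(2,3)] by auto
  then show "e \<in> (\<lambda>v. {v, partner v}) ` {..<n}" using xy(2,3) by blast
next
  fix e assume "e \<in> (\<lambda>v. {v, partner v}) ` {..<n}"
  then obtain v where v: "v < n" "e = {v, partner v}" by blast
  then have "covers l (slot v) (slot (partner v))"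
    using covers_slot_iff_partner[OF v(1) partner_less] by simp
  moreover have "v \<noteq> partner v" using partner_neq[of v] by simp
  ultimately show "e \<in> H n 2 ws"
    unfolding mem_H2_iff using v partner_less by blast
qed

lemma inj_on_partner_pairs: "inj_on (\<lambda>v. {v, partner v}) {..<n}"
proof (rule inj_onI, rule ccontr)
  fix u v assume "{u, partner u} = {v, partner v}" "u \<noteq> v"
  then have u: "u = partner v" and v: "v = partner u" unfolding doubleton_eq_iff by metis+
  define k where "k = slot u div 2"
  \<comment> \<open>going to the partner twice advances the vertex index by one\<close>
  have "slot v = 2 * tuple_succ k"
    unfolding k_def by (subst v) (rule slot_partner)
  then have "slot u = 2 * tuple_succ (tuple_succ k)"
    by (subst u) (simp add: slot_partner)
  then have "k = (k + 1) mod m" unfolding k_def tuple_succ_succ by simp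
  moreover have "k < m" using slot_le[of u] unfolding k_def m_def by simp
  ultimately show False using add_mod_neq_self[of k m 1] m_ge_3 by simp
qed

lemma tuple_succ_pairs:
  "{{wi ws i, wi ws (i + 1)} | i. i \<in> {1..int m}} = {{qs ! c, qs ! tuple_succ c} | c. c < m}"
proof (rule set_eqI)
  fix e
  have "e \<in> {{wi ws i, wi ws (i + 1)} | i. i \<in> {1..int m}} \<longleftrightarrow>
      (\<exists>i\<in>{1..int m}. e = {wi ws i, wi ws (i + 1)})" by blast
  also have "\<dots> \<longleftrightarrow> (\<exists>c<m. e = {qs ! c, qs ! tuple_succ c})"
    using ex_tuple_index_iff[of "\<lambda>_ w w'. e = {w, w'}"] .
  also have "\<dots> \<longleftrightarrow> e \<in> {{qs ! c, qs ! tuple_succ c} | c. c < m}" by blast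
  finally show "e \<in> {{wi ws i, wi ws (i + 1)} | i. i \<in> {1..int m}} \<longleftrightarrow>
      e \<in> {{qs ! c, qs ! tuple_succ c} | c. c < m}" .
qed

lemma tuple_gap_pairs:
  "{{v, wi ws i} | v i. i \<in> {1..int m} \<and> v \<in> cyc_open n (wi ws (i - 1)) (wi ws (i + 1))} =
   {{v, qs ! c} | v c. c < m \<and> v \<in> cyc_open n (qs ! tuple_pred c) (qs ! tuple_succ c)}"
proof (rule set_eqI)
  fix e
  have reindex:
    "(\<exists>i\<in>{1..int m}. v \<in> cyc_open n (wi ws (i - 1)) (wi ws (i + 1)) \<and> e = {v, wi ws i}) \<longleftrightarrow>
     (\<exists>c<m. v \<in> cyc_open n (qs ! tuple_pred c) (qs ! tuple_succ c) \<and> e = {v, qs ! c})" for v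
    using ex_tuple_index_iff[of "\<lambda>u w w'. v \<in> cyc_open n u w' \<and> e = {v, w}"] .
  have "e \<in> {{v, wi ws i} | v i. i \<in> {1..int m} \<and> v \<in> cyc_open n (wi ws (i - 1)) (wi ws (i + 1))}
      \<longleftrightarrow> (\<exists>v. \<exists>i\<in>{1..int m}. v \<in> cyc_open n (wi ws (i - 1)) (wi ws (i + 1)) \<and> e = {v, wi ws i})"
    by blast
  also have "\<dots> \<longleftrightarrow>
      (\<exists>v. \<exists>c<m. v \<in> cyc_open n (qs ! tuple_pred c) (qs ! tuple_succ c) \<and> e = {v, qs ! c})"
    by (simp only: reindex)
  also have "\<dots> \<longleftrightarrow>
      e \<in> {{v, qs ! c} | v c. c < m \<and> v \<in> cyc_open n (qs ! tuple_pred c) (qs ! tuple_succ c)}"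
    by blast
  finally show "e \<in> {{v, wi ws i} | v i. i \<in> {1..int m} \<and> v \<in> cyc_open n (wi ws (i - 1)) (wi ws (i + 1))}
      \<longleftrightarrow> e \<in> {{v, qs ! c} | v c. c < m \<and> v \<in> cyc_open n (qs ! tuple_pred c) (qs ! tuple_succ c)}" .
qed

lemma vertex_partner_pairs:
  "{{qs ! c, qs ! tuple_succ c} | c. c < m} = (\<lambda>v. {v, partner v}) ` {v. v < n \<and> even (slot v)}"
proof (intro equalityI subsetI)
  fix e assume "e \<in> {{qs ! c, qs ! tuple_succ c} | c. c < m}"
  then obtain c where c: "c < m" "e = {qs ! c, qs ! tuple_succ c}" by blast
  then have "e = {qs ! c, partner (qs ! c)}" unfolding partner_def using slot_qs by simp
  moreover have "qs ! c \<in> {v. v < n \<and> even (slot v)}" using c qs_nth_less slot_qs by simp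
  ultimately show "e \<in> (\<lambda>v. {v, partner v}) ` {v. v < n \<and> even (slot v)}" by (rule image_eqI)
next
  fix e assume "e \<in> (\<lambda>v. {v, partner v}) ` {v. v < n \<and> even (slot v)}"
  then obtain v where "v < n" "even (slot v)" and e: "e = {v, partner v}" by blast
  then obtain k where v: "v < n" "slot v = 2 * k" by (blast elim: evenE)
  then have "k < m" "e = {qs ! k, qs ! tuple_succ k}"
    using slot_eq_even[OF v] unfolding e partner_def by simp_all
  then show "e \<in> {{qs ! c, qs ! tuple_succ c} | c. c < m}" by blast
qed

lemma gap_partner_pairs:
  "{{v, qs ! c} | v c. c < m \<and> v \<in> cyc_open n (qs ! tuple_pred c) (qs ! tuple_succ c)} =
   (\<lambda>v. {v, partner v}) ` {v. v < n \<and> odd (slot v)}"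
proof (intro equalityI subsetI)
  fix e assume "e \<in> {{v, qs ! c} | v c. c < m \<and> v \<in> cyc_open n (qs ! tuple_pred c) (qs ! tuple_succ c)}"
  then obtain v c where c: "c < m" "v \<in> cyc_open n (qs ! tuple_pred c) (qs ! tuple_succ c)"
    and e: "e = {v, qs ! c}" by blast
  then have "v < n" "slot v = 2 * tuple_pred c + 1"
    using mem_cyc_open_slot[OF tuple_pred_less[of c], of v] Suc_tuple_pred_mod by simp_all
  moreover from this have "e = {v, partner v}"
    unfolding partner_def e using tuple_succ_pred[OF c(1)] by simp
  ultimately show "e \<in> (\<lambda>v. {v, partner v}) ` {v. v < n \<and> odd (slot v)}" by simp
next
  fix e assume "e \<in> (\<lambda>v. {v, partner v}) ` {v. v < n \<and> odd (slot v)}"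
  then obtain v where "v < n" "odd (slot v)" and e: "e = {v, partner v}" by blast
  then obtain k where v: "v < n" "slot v = 2 * k + 1" by (blast elim: oddE)
  have "k < m" using slot_le[of v] v(2) unfolding m_def by simp
  then have "v \<in> cyc_open n (qs ! tuple_pred (tuple_succ k)) (qs ! tuple_succ (tuple_succ k))"
    using mem_cyc_open_slot[of k v] v tuple_pred_succ tuple_succ_succ by simp
  moreover have "e = {v, qs ! tuple_succ k}" unfolding e partner_def using v(2) by simp
  ultimately show "e \<in> {{v, qs ! c} | v c. c < m \<and> v \<in> cyc_open n (qs ! tuple_pred c) (qs ! tuple_succ c)}"
    using tuple_succ_less by blast
qed

lemma listed_pairs_eq_partner_pairs:
  "{{wi ws i, wi ws (i + 1)} | i. i \<in> {1..2 * int l + 1}} \<union>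
   {{v, wi ws i} | v i. i \<in> {1..2 * int l + 1} \<and> v \<in> cyc_open n (wi ws (i - 1)) (wi ws (i + 1))}
   = (\<lambda>v. {v, partner v}) ` {..<n}"
proof -
  have "{1..2 * int l + 1} = {1..int m}" unfolding m_def by simp
  moreover have "{..<n} = {v. v < n \<and> even (slot v)} \<union> {v. v < n \<and> odd (slot v)}" by auto
  ultimately show ?thesis
    using tuple_succ_pairs tuple_gap_pairs vertex_partner_pairs gap_partner_pairs
    by (simp add: image_Un)
qed

end

theorem lemma3p1:
  fixes n l :: nat and ws :: "nat list"
  assumes "l \<ge> 1" and "semi_valid n l ws"
  shows "H n 2 ws =
           {{wi ws i, wi ws (i + 1)} | i. i \<in> {1..2 * int l + 1}} \<union>
           {{v, wi ws i} | v i. i \<in> {1..2 * int l + 1} \<and>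
                               v \<in> cyc_open n (wi ws (i - 1)) (wi ws (i + 1))}
         \<and> card (H n 2 ws) = n"
proof -
  interpret semi_valid_tuple n l ws using assms by unfold_locales
  show ?thesis
    using H2_eq_partner_pairs listed_pairs_eq_partner_pairs card_image[OF inj_on_partner_pairs]
    by simp
qed

end
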